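(* For $0\le k\le n$, $B(n,k)$ equals the number of snakes $\pi=\pi_1\cdots\pi_n$ of type $B_n$ with $\alpha(\pi)=k$, where $$\alpha(\pi)=\#\{j \text{ odd}:\pi_j>0\}+\#\{j\text{ even}:\pi_j<0\}-\#\{j\text{ odd}:\pi_j<0\}-\#\{j\text{ even}:\pi_j>0\},$$ $j$ ranging over $\{1,\dots,n\}$.
   Context: A signed permutation of $[n]$ is a permutation of $[n]$ with some entries negated ($\bar i=-i$), ordered by $\bar n<\cdots<\bar1<1<\cdots<n$. A snake of type $B_n$ is a signed permutation with $0<\pi_1>\pi_2<\pi_3>\pi_4<\cdots\pi_n$. A labeled ballot path is a lattice path from $(0,0)$ with steps $u=(1,1)$, $d=(1,-1)$ never going below the $x$-axis, each step carrying an integer label between $0$ and its height, where the height of a step is the smaller $y$-coordinate of its endpoints. $B(n,k)$ is the number of labeled ballot paths from $(0,0)$ ending at $(n,k)$. *)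

theory Defs
  imports Main
begin

text \<open>Signed permutations of [n] as integer lists pi_1 ... pi_n (bar i = -i); the order
  bar n < ... < bar 1 < 1 < ... < n is the usual order on int.\<close>
definition signed_perm :: "nat \<Rightarrow> int list \<Rightarrow> bool" where
  "signed_perm n p \<longleftrightarrow> length p = n \<and> distinct (map abs p) \<and> set (map abs p) = {1..int n}"

text \<open>Snake of type B_n: 0 < pi_1 > pi_2 < pi_3 > ... (positions 1-indexed;
  list index i corresponds to position i+1).\<close>
definition snake :: "nat \<Rightarrow> int list \<Rightarrow> bool" where
  "snake n p \<longleftrightarrow> signed_perm n p \<and> (n \<ge> 1 \<longrightarrow> 0 < p ! 0) \<and>
     (\<forall>i. i + 1 < n \<longrightarrow> (if even i then p ! i > p ! (i+1) else p ! i < p ! (i+1)))"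

text \<open>alpha statistic; list index i is position j = i+1, so j odd iff i even.\<close>
definition alpha :: "int list \<Rightarrow> int" where
  "alpha p =
     int (card {i. i < length p \<and> even i \<and> p ! i > 0})
   + int (card {i. i < length p \<and> odd i \<and> p ! i < 0})
   - int (card {i. i < length p \<and> even i \<and> p ! i < 0})
   - int (card {i. i < length p \<and> odd i \<and> p ! i > 0})"

text \<open>Labeled ballot paths: a list of steps (up?, label). Starting at height h,
  an up step goes h -> h+1 with height h; a down step goes h -> h-1 (requires h > 0,
  so the path never goes below the x-axis) with height h-1. Labels range over 0..height.\<close>
fun lbp_valid :: "nat \<Rightarrow> (bool \<times> nat) list \<Rightarrow> bool" where
  "lbp_valid h [] = True"
| "lbp_valid h ((up, l) # s) =
     (if up then l \<le> h \<and> lbp_valid (h + 1) s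
      else 0 < h \<and> l \<le> h - 1 \<and> lbp_valid (h - 1) s)"

fun lbp_end :: "nat \<Rightarrow> (bool \<times> nat) list \<Rightarrow> nat" where
  "lbp_end h [] = h"
| "lbp_end h ((up, l) # s) = lbp_end (if up then h + 1 else h - 1) s"

definition B :: "nat \<Rightarrow> nat \<Rightarrow> nat" where
  "B n k = card {s. length s = n \<and> lbp_valid 0 s \<and> lbp_end 0 s = k}"

end

theory Submission
  imports Defs
begin

(* Both sides satisfy f(0,k) = [k = 0] and
     f(n+1,k) = k f(n,k-1) + (k+1) f(n,k+1),
   so they agree for all n and k.
   For ballot paths the recursion comes from removing the last step.  For snakes, the entry
   of absolute value 1 of a snake of size n+1 is removed; the remaining entries are brought
   back to a snake of size n by decreasing absolute values and negating the entries after the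
   removed one.  Conversely, inserting x = +-1 at slot j of a snake s of size n yields a snake
   iff x "fits" at j, and changes alpha by (-1)^j x.  Reading the signs of s through its
   sign word e_i = (-1)^i sgn s_i, the fitting slots are the positions both of whose
   neighbours in e are +1; since e has no two consecutive -1, there are alpha s + 1 of them.
   Every slot gives one insertion raising alpha, and every slot except the front also one
   lowering it, which yields the recursion. *)

subsection \<open>The ballot-path recursion\<close>

lemma lbp_snoc:
  "lbp_valid h (s @ [(u, l)]) \<longleftrightarrow>
     lbp_valid h s \<and> (if u then l \<le> lbp_end h s else 0 < lbp_end h s \<and> l \<le> lbp_end h s - 1)"
  "lbp_end h (s @ [(u, l)]) = (if u then lbp_end h s + 1 else lbp_end h s - 1)"
  by (induction s arbitrary: h) auto

lemma lbp_label_bound: "lbp_valid h s \<Longrightarrow> \<forall>(u, l) \<in> set s. l \<le> h + length s"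
proof (induction h s rule: lbp_valid.induct)
  case (2 h up l s)
  then show ?case by (cases up) auto
qed simp

definition paths :: "nat \<Rightarrow> nat \<Rightarrow> (bool \<times> nat) list set" where
  "paths n k = {s. length s = n \<and> lbp_valid 0 s \<and> lbp_end 0 s = k}"

lemma finite_paths: "finite (paths n k)"
proof (rule finite_subset)
  show "paths n k \<subseteq> {s. set s \<subseteq> UNIV \<times> {0..n} \<and> length s = n}"
    unfolding paths_def using lbp_label_bound[where h = 0] by fastforce
  show "finite {s. set s \<subseteq> (UNIV :: bool set) \<times> {0..n} \<and> length s = n}"
    by (rule finite_lists_length_eq) simp
qed

lemma paths_Suc:
  "paths (Suc n) k =
     (\<lambda>(s, l). s @ [(True, l)]) ` (paths n (k - 1) \<times> {0..<k}) \<union>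
     (\<lambda>(s, l). s @ [(False, l)]) ` (paths n (k + 1) \<times> {0..k})"
    (is "_ = ?Up \<union> ?Down")
proof (intro set_eqI iffI)
  fix t assume t: "t \<in> paths (Suc n) k"
  then have "t \<noteq> []" by (auto simp: paths_def)
  then obtain s u l where ts: "t = s @ [(u, l)]" by (metis prod.exhaust rev_exhaust)
  show "t \<in> ?Up \<union> ?Down"
  proof (cases u)
    case True
    then have "(s, l) \<in> paths n (k - 1) \<times> {0..<k}" using t ts by (auto simp: paths_def lbp_snoc)
    then show ?thesis using ts True by force
  next
    case False
    then have "(s, l) \<in> paths n (k + 1) \<times> {0..k}" using t ts by (auto simp: paths_def lbp_snoc)
    then show ?thesis using ts False by force
  qed
qed (auto simp: paths_def lbp_snoc)

lemma B_0: "B 0 k = (if k = 0 then 1 else 0)"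
  by (simp add: B_def cong: conj_cong)

lemma B_Suc: "B (Suc n) k = k * B n (k - 1) + (k + 1) * B n (k + 1)"
proof -
  let ?up = "\<lambda>(s, l). s @ [(True, l)]" and ?down = "\<lambda>(s, l). s @ [(False, l)]"
  have inj: "inj_on ?up X" "inj_on ?down Y" for X Y by (auto simp: inj_on_def)
  have "B (Suc n) k = card (paths (Suc n) k)" by (simp add: B_def paths_def)
  also have "\<dots> = card (?up ` (paths n (k - 1) \<times> {0..<k}) \<union> ?down ` (paths n (k + 1) \<times> {0..k}))"
    by (simp only: paths_Suc)
  also have "\<dots> = card (paths n (k - 1) \<times> {0..<k}) + card (paths n (k + 1) \<times> {0..k})"
    by (subst card_Un_disjoint) (auto simp: finite_paths card_image[OF inj(1)] card_image[OF inj(2)])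
  finally show ?thesis by (simp add: card_cartesian_product B_def paths_def)
qed

subsection \<open>The insertion operation and the statistic alpha\<close>

definition lift :: "int \<Rightarrow> int" where "lift y = y + sgn y"

definition unlift :: "int \<Rightarrow> int" where "unlift y = y - sgn y"

lemma sgn_lift [simp]: "sgn (lift y) = sgn y"
  by (auto simp: lift_def sgn_if)

lemma lift_less_iff [simp]: "lift a < lift b \<longleftrightarrow> a < b"
  by (auto simp: lift_def sgn_if)

lemma lift_eq_iff [simp]: "lift a = lift b \<longleftrightarrow> a = b"
  by (metis lift_less_iff not_less_iff_gr_or_eq)

lemma abs_lift: "y \<noteq> 0 \<Longrightarrow> \<bar>lift y\<bar> = \<bar>y\<bar> + 1"
  by (auto simp: lift_def sgn_if)

lemma lift_unlift: "2 \<le> \<bar>y\<bar> \<Longrightarrow> lift (unlift y) = y"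
  by (auto simp: lift_def unlift_def sgn_if)

text \<open>Negation compensates for the shift of
  parity of their positions, so the zigzag pattern behind the slot is preserved.\<close>

definition insert_at :: "int list \<Rightarrow> nat \<Rightarrow> int \<Rightarrow> int list" where
  "insert_at s j x = map lift (take j s) @ x # map (\<lambda>y. - lift y) (drop j s)"

lemma length_insert_at [simp]: "j \<le> length s \<Longrightarrow> length (insert_at s j x) = Suc (length s)"
  by (simp add: insert_at_def)

lemma insert_at_not_Nil [simp]: "insert_at s j x \<noteq> []"
  by (simp add: insert_at_def)

lemma nth_insert_at:
  assumes "j \<le> length s" "i \<le> length s"
  shows "insert_at s j x ! i = (if i < j then lift (s ! i) else if i = j then x else - lift (s ! (i - 1)))"
proof -
  have "i - Suc j + j = i - 1" if "j < i" using that by simp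
  then show ?thesis using assms by (auto simp: insert_at_def nth_append nth_Cons' min_def)
qed

text \<open>Signs of p weighted alternately by +1 and -1, starting with +1 iff b.  The sign word
  signs True p has i-th letter (-1)^i sgn p_i (letters counted from 0), and alpha p is
  exactly its sum.\<close>

fun signs :: "bool \<Rightarrow> int list \<Rightarrow> int list" where
  "signs b [] = []"
| "signs b (y # r) = (if b then sgn y else - sgn y) # signs (\<not> b) r"

lemma length_signs [simp]: "length (signs b l) = length l"
  by (induction l arbitrary: b) auto

lemma nth_signs: "i < length l \<Longrightarrow> signs b l ! i = (if even i = b then sgn (l ! i) else - sgn (l ! i))"
  by (induction l arbitrary: b i) (auto simp: nth_Cons split: nat.splits)

lemma signs_append: "signs b (xs @ ys) = signs b xs @ signs (b = even (length xs)) ys"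
  by (induction xs arbitrary: b) (auto intro!: arg_cong[where f = "\<lambda>c. signs c ys"])

lemma signs_lift: "signs b (map lift l) = signs b l"
  by (induction l arbitrary: b) auto

lemma signs_neg_lift: "signs b (map (\<lambda>y. - lift y) l) = signs (\<not> b) l"
  by (induction l arbitrary: b) (auto simp: sgn_minus)

lemma int_card_filter_lessThan: "int (card {i. i < (L :: nat) \<and> Q i}) = (\<Sum>i<L. if Q i then 1 else 0)"
proof (induction L)
  case (Suc L)
  have "{i. i < Suc L \<and> Q i} = {i. i < L \<and> Q i} \<union> (if Q L then {L} else {})"
    by (auto simp: less_Suc_eq)
  then show ?case using Suc by (simp add: card_insert_if)
qed simp

lemma alpha_signs: "alpha p = sum_list (signs True p)"
proof -
  have "sum_list (signs True p) = (\<Sum>i<length p. if even i then sgn (p ! i) else - sgn (p ! i))"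
    by (simp add: sum_list_sum_nth atLeast0LessThan nth_signs)
  also have "\<dots> = (\<Sum>i<length p. (if even i \<and> p ! i > 0 then 1 else 0) + (if odd i \<and> p ! i < 0 then 1 else 0)
     - (if even i \<and> p ! i < 0 then 1 else 0) - (if odd i \<and> p ! i > 0 then 1 else 0))"
    by (rule sum.cong) (auto simp: sgn_if)
  also have "\<dots> = alpha p"
    by (simp add: alpha_def int_card_filter_lessThan sum.distrib sum_subtractf)
  finally show ?thesis by simp
qed

definition delta :: "nat \<Rightarrow> int \<Rightarrow> int" where "delta j x = (if even j then sgn x else - sgn x)"

text \<open>Insertion changes alpha by delta j x: the prefix keeps its signs and the negated suffix
  keeps its contribution because its parity flips too.\<close>

lemma alpha_insert_at:
  assumes "j \<le> length s"
  shows "alpha (insert_at s j x) = alpha s + delta j x"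
proof -
  have "alpha s = sum_list (signs True (take j s)) + sum_list (signs (even j) (drop j s))"
    using assms signs_append[of True "take j s" "drop j s"] by (simp add: alpha_signs min_def)
  moreover have "alpha (insert_at s j x) =
      sum_list (signs True (take j s)) + delta j x + sum_list (signs (even j) (drop j s))"
    using assms
    by (simp add: alpha_signs insert_at_def signs_append signs_lift signs_neg_lift delta_def min_def)
  ultimately show ?thesis by simp
qed

subsection \<open>Insertion preserves signed permutations\<close>

lemma distinct_insert_middle: "distinct (xs @ y # ys) \<longleftrightarrow> y \<notin> set (xs @ ys) \<and> distinct (xs @ ys)"
  by auto

lemma set_insert_middle: "set (xs @ y # ys) = insert y (set (xs @ ys))"
  by auto

lemma shift_interval:
  fixes S :: "int set"
  assumes "\<forall>y \<in> S. 1 \<le> y"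
  shows "insert 1 ((\<lambda>y. y + 1) ` S) = {1..int (Suc n)} \<longleftrightarrow> S = {1..int n}"
proof -
  have interval: "{1..int (Suc n)} = insert 1 ((\<lambda>y. y + 1) ` {1..int n})"
    by (auto simp: image_iff intro: bexI[where x = "_ - 1"])
  have notin: "1 \<notin> (\<lambda>y. y + 1) ` S" "1 \<notin> (\<lambda>y. y + 1) ` {1..int n}" using assms by auto
  have "insert 1 ((\<lambda>y. y + 1) ` S) = {1..int (Suc n)} \<longleftrightarrow>
      (\<lambda>y. y + 1) ` S = (\<lambda>y. y + 1) ` {1..int n}"
    unfolding interval by (rule insert_ident[OF notin])
  also have "\<dots> \<longleftrightarrow> S = {1..int n}"
    by (rule inj_image_eq_iff) (simp add: inj_on_def)
  finally show ?thesis .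
qed

lemma map_abs_insert_at:
  assumes "j \<le> length s" "0 \<notin> set s" "\<bar>x\<bar> = 1"
  shows "map abs (insert_at s j x) =
    take j (map (\<lambda>y. y + 1) (map abs s)) @ 1 # drop j (map (\<lambda>y. y + 1) (map abs s))"
proof -
  have "\<bar>lift y\<bar> = \<bar>y\<bar> + 1" if "y \<in> set s" for y
    using that assms(2) by (intro abs_lift) auto
  then have "\<forall>y \<in> set (take j s). \<bar>lift y\<bar> = \<bar>y\<bar> + 1" "\<forall>y \<in> set (drop j s). \<bar>lift y\<bar> = \<bar>y\<bar> + 1"
    by (auto dest: in_set_takeD in_set_dropD)
  then show ?thesis
    using assms(3) by (simp add: insert_at_def take_map drop_map comp_def)
qed

lemma signed_perm_insert_at:
  assumes "j \<le> length s" "0 \<notin> set s" "\<bar>x\<bar> = 1"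
  shows "signed_perm (Suc n) (insert_at s j x) \<longleftrightarrow> signed_perm n s"
proof -
  let ?t = "map (\<lambda>y. y + 1) (map abs s)"
  have pos: "\<forall>y \<in> set (map abs s). 1 \<le> y" using assms(2) by (auto simp: int_one_le_iff_zero_less)
  have "distinct (map abs (insert_at s j x)) \<longleftrightarrow> 1 \<notin> set ?t \<and> distinct ?t"
    by (simp only: map_abs_insert_at[OF assms] distinct_insert_middle append_take_drop_id)
  also have "\<dots> \<longleftrightarrow> distinct (map abs s)"
    using pos by (auto simp: distinct_map[of "\<lambda>y. y + 1"] inj_on_def simp del: map_map)
  finally have "distinct (map abs (insert_at s j x)) \<longleftrightarrow> distinct (map abs s)" .
  moreover have "set (map abs (insert_at s j x)) = insert 1 ((\<lambda>y. y + 1) ` set (map abs s))"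
    by (simp only: map_abs_insert_at[OF assms] set_insert_middle append_take_drop_id set_map)
  ultimately show ?thesis
    using assms(1) shift_interval[OF pos, of n] by (simp add: signed_perm_def del: set_map)
qed

subsection \<open>Insertion and the alternation condition\<close>

definition zigzag_at :: "int list \<Rightarrow> nat \<Rightarrow> bool" where
  "zigzag_at p i \<longleftrightarrow> (if even i then p ! (i + 1) < p ! i else p ! i < p ! (i + 1))"

definition alternating :: "int list \<Rightarrow> bool" where
  "alternating p \<longleftrightarrow> (p \<noteq> [] \<longrightarrow> 0 < p ! 0) \<and> (\<forall>i. i + 1 < length p \<longrightarrow> zigzag_at p i)"

lemma snake_iff: "snake n p \<longleftrightarrow> signed_perm n p \<and> alternating p"
  by (auto simp: snake_def alternating_def zigzag_at_def signed_perm_def)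

definition fits :: "int list \<Rightarrow> nat \<Rightarrow> int \<Rightarrow> bool" where
  "fits s j x \<longleftrightarrow> (if j = 0 then 0 < x else zigzag_at (insert_at s j x) (j - 1)) \<and>
     (j < length s \<longrightarrow> zigzag_at (insert_at s j x) j)"

lemma zigzag_insert_before:
  "j \<le> length s \<Longrightarrow> i + 1 < j \<Longrightarrow> zigzag_at (insert_at s j x) i \<longleftrightarrow> zigzag_at s i"
  by (simp add: zigzag_at_def nth_insert_at)

lemma zigzag_insert_after:
  "j \<le> i \<Longrightarrow> i + 1 < length s \<Longrightarrow> zigzag_at (insert_at s j x) (Suc i) \<longleftrightarrow> zigzag_at s i"
  by (auto simp: zigzag_at_def nth_insert_at)

lemma first_insert_at: "0 < j \<Longrightarrow> j \<le> length s \<Longrightarrow> 0 < insert_at s j x ! 0 \<longleftrightarrow> 0 < s ! 0"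
  by (simp add: nth_insert_at lift_def sgn_if)

text \<open>If x fits at slot j then the two old neighbours of the slot already satisfied the
  zigzag condition between them (resp. the first entry is positive when j = 0), because
  x has absolute value 1 and all other entries are lifted away from it.\<close>

lemma fits_bridge:
  assumes "j \<le> length s" "0 \<notin> set s" "\<bar>x\<bar> = 1" "fits s j x"
  shows "0 < j \<Longrightarrow> j < length s \<Longrightarrow> zigzag_at s (j - 1)"
    and "j = 0 \<Longrightarrow> s \<noteq> [] \<Longrightarrow> 0 < s ! 0"
proof -
  assume j: "0 < j" "j < length s"
  then have "s ! (j - 1) \<noteq> 0" "s ! j \<noteq> 0" using assms(2) by (metis less_imp_diff_less nth_mem)+
  then show "zigzag_at s (j - 1)"
    using assms(3,4) j by (auto simp: fits_def zigzag_at_def nth_insert_at lift_def sgn_if abs_if split: if_splits)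
next
  assume j: "j = 0" "s \<noteq> []"
  have "s ! 0 \<noteq> 0" "Suc 0 \<le> length s" using j(2) assms(2) by (auto simp: neq_Nil_conv)
  then show "0 < s ! 0"
    using assms(3,4) j by (auto simp: fits_def zigzag_at_def nth_insert_at lift_def sgn_if abs_if split: if_splits)
qed

lemma alternating_insert_at:
  assumes "j \<le> length s" "0 \<notin> set s" "\<bar>x\<bar> = 1"
  shows "alternating (insert_at s j x) \<longleftrightarrow> alternating s \<and> fits s j x"
proof
  assume alt: "alternating (insert_at s j x)"
  have zz: "zigzag_at (insert_at s j x) i" if "i < length s" for i
    using alt that assms(1) by (simp add: alternating_def)
  have fits: "fits s j x"
  proof (cases "j = 0")
    case True
    then show ?thesis using alt zz assms(1) by (auto simp: fits_def alternating_def nth_insert_at)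
  qed (use zz assms(1) in \<open>auto simp: fits_def\<close>)
  have "0 < s ! 0" if "s \<noteq> []"
  proof (cases "j = 0")
    case False
    then show ?thesis using alt assms(1) first_insert_at[of j s x] by (simp add: alternating_def)
  qed (use fits_bridge(2)[OF assms fits] that in blast)
  moreover have "zigzag_at s i" if i: "i + 1 < length s" for i
  proof -
    consider "i + 1 < j" | "i + 1 = j" | "j \<le> i" by linarith
    then show ?thesis
    proof cases
      case 1
      then show ?thesis using zz[of i] i assms(1) zigzag_insert_before by simp
    next
      case 2
      then have "i = j - 1" "0 < j" "j < length s" using i by auto
      then show ?thesis using fits_bridge(1)[OF assms fits] by simp
    next
      case 3
      then show ?thesis using zz[of "Suc i"] i zigzag_insert_after by simp
    qed
  qed
  ultimately show "alternating s \<and> fits s j x" using fits by (simp add: alternating_def)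
next
  assume "alternating s \<and> fits s j x"
  then have alt: "alternating s" and fits: "fits s j x" by auto
  have "0 < insert_at s j x ! 0"
  proof (cases "j = 0")
    case True
    then show ?thesis using fits assms(1) by (simp add: fits_def nth_insert_at)
  next
    case False
    then show ?thesis using alt assms(1) first_insert_at[of j s x] by (cases s) (auto simp: alternating_def)
  qed
  moreover have "zigzag_at (insert_at s j x) i" if i: "i < length s" for i
  proof -
    consider "i + 1 < j" | "i + 1 = j" | "i = j" | "j < i" by linarith
    then show ?thesis
    proof cases
      case 1
      then show ?thesis using alt i assms(1) zigzag_insert_before by (simp add: alternating_def)
    next
      case 4
      then obtain k where "i = Suc k" "j \<le> k" by (cases i) auto
      then show ?thesis using alt i zigzag_insert_after by (simp add: alternating_def)
    qed (use fits i in \<open>auto simp: fits_def\<close>)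
  qed
  ultimately show "alternating (insert_at s j x)" using assms(1) by (simp add: alternating_def)
qed

subsection \<open>Every snake arises from exactly one insertion\<close>

lemma snake_length_nonzero:
  assumes "snake n s"
  shows "length s = n" "0 \<notin> set s"
proof -
  have sp: "signed_perm n s" using assms by (simp add: snake_iff)
  then show "length s = n" by (simp add: signed_perm_def)
  have "0 \<notin> set (map abs s)" using sp by (simp add: signed_perm_def del: set_map)
  then show "0 \<notin> set s" by (metis abs_0 image_eqI list.set_map)
qed

lemma abs_insert_at_eq_one:
  assumes "j \<le> length s" "0 \<notin> set s" "\<bar>x\<bar> = 1" "i \<le> length s"
  shows "\<bar>insert_at s j x ! i\<bar> = 1 \<longleftrightarrow> i = j"
proof -
  have "s ! i \<noteq> 0" if "i < length s" for i using that assms(2) by (metis nth_mem)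
  then show ?thesis using assms by (auto simp: nth_insert_at abs_lift)
qed

lemma insert_at_inj:
  assumes "length s = length s'" "0 \<notin> set s" "0 \<notin> set s'"
    and "j \<le> length s" "j' \<le> length s" "\<bar>x\<bar> = 1" "\<bar>x'\<bar> = 1"
    and eq: "insert_at s j x = insert_at s' j' x'"
  shows "s = s' \<and> j = j' \<and> x = x'"
proof -
  have "\<bar>insert_at s j x ! j\<bar> = 1"
    using abs_insert_at_eq_one[of j s x j] assms(2,4,6) by simp
  then have jj: "j = j'" using abs_insert_at_eq_one[of j' s' x' j] assms(1,3-7) by (simp add: eq)
  have "x = x'" using arg_cong[OF eq, of "\<lambda>p. p ! j"] assms(1,4,5) jj by (simp add: nth_insert_at)
  moreover have "s = s'"
  proof (rule nth_equalityI)
    fix i assume i: "i < length s"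
    show "s ! i = s' ! i"
    proof (cases "i < j")
      case True
      then show ?thesis using arg_cong[OF eq, of "\<lambda>p. p ! i"] assms(1,4) jj i by (simp add: nth_insert_at)
    next
      case False
      then show ?thesis using arg_cong[OF eq, of "\<lambda>p. p ! Suc i"] assms(1,4) jj i by (simp add: nth_insert_at)
    qed
  qed (use assms(1) in simp)
  ultimately show ?thesis using jj by simp
qed

definition delete_at :: "int list \<Rightarrow> nat \<Rightarrow> int list" where
  "delete_at p j = map unlift (take j p) @ map (\<lambda>y. unlift (- y)) (drop (Suc j) p)"

lemma insert_delete_at:
  assumes j: "j < length p" and big: "\<And>i. i < length p \<Longrightarrow> i \<noteq> j \<Longrightarrow> 2 \<le> \<bar>p ! i\<bar>"
  shows "length (delete_at p j) = length p - 1" "0 \<notin> set (delete_at p j)"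
    and "insert_at (delete_at p j) j (p ! j) = p"
proof -
  let ?s = "delete_at p j"
  show len: "length ?s = length p - 1" using j by (simp add: delete_at_def)
  have nth: "?s ! i = (if i < j then unlift (p ! i) else unlift (- (p ! Suc i)))"
    if "i < length p - 1" for i
    using that j by (auto simp: delete_at_def nth_append)
  show "0 \<notin> set ?s"
  proof
    assume "0 \<in> set ?s"
    then obtain i where i: "i < length p - 1" "?s ! i = 0" using len by (auto simp: in_set_conv_nth)
    have "2 \<le> \<bar>p ! (if i < j then i else Suc i)\<bar>" using big i by auto
    then show False using i nth[OF i(1)] by (auto simp: unlift_def sgn_if split: if_splits)
  qed
  show "insert_at ?s j (p ! j) = p"
  proof (rule nth_equalityI)
    fix i assume "i < length (insert_at ?s j (p ! j))"
    then have i: "i < length p" using j len by simp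
    then show "insert_at ?s j (p ! j) ! i = p ! i"
      using j len big[of i] nth[of i] nth[of "i - 1"]
      by (auto simp: nth_insert_at lift_unlift)
  qed (use j len in simp)
qed

lemma signed_perm_entry_one:
  assumes "signed_perm (Suc n) p"
  obtains j where "j \<le> n" "\<bar>p ! j\<bar> = 1" "\<And>i. i \<le> n \<Longrightarrow> i \<noteq> j \<Longrightarrow> 2 \<le> \<bar>p ! i\<bar>"
proof -
  have len: "length p = Suc n" and dist: "distinct (map abs p)"
    and vals: "set (map abs p) = {1..int (Suc n)}"
    using assms by (auto simp: signed_perm_def)
  have "1 \<in> set (map abs p)" using vals by simp
  then obtain j where j: "j \<le> n" "\<bar>p ! j\<bar> = 1" using len by (auto simp: in_set_conv_nth less_Suc_eq_le)
  have "2 \<le> \<bar>p ! i\<bar>" if "i \<le> n" "i \<noteq> j" for i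
  proof -
    have "\<bar>p ! i\<bar> \<in> set (map abs p)" using that len by (metis le_imp_less_Suc length_map nth_map nth_mem)
    moreover have "\<bar>p ! i\<bar> \<noteq> \<bar>p ! j\<bar>"
      using nth_eq_iff_index_eq[OF dist, of i j] that j len by simp
    ultimately show ?thesis using vals j by auto
  qed
  then show ?thesis using j that by blast
qed

lemma snake_Suc_decompose:
  assumes "snake (Suc n) p"
  obtains s j x where "snake n s" "j \<le> n" "\<bar>x\<bar> = 1" "fits s j x" "p = insert_at s j x"
proof -
  have sp: "signed_perm (Suc n) p" and alt: "alternating p" and len: "length p = Suc n"
    using assms snake_length_nonzero(1) by (auto simp: snake_iff)
  obtain j where j: "j \<le> n" "\<bar>p ! j\<bar> = 1" and big: "\<And>i. i \<le> n \<Longrightarrow> i \<noteq> j \<Longrightarrow> 2 \<le> \<bar>p ! i\<bar>"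
    using signed_perm_entry_one[OF sp] by blast
  let ?s = "delete_at p j"
  have del: "length ?s = n" "0 \<notin> set ?s" "insert_at ?s j (p ! j) = p"
    using insert_delete_at[of j p] j big len by auto
  have "signed_perm n ?s"
    using sp signed_perm_insert_at[of j ?s "p ! j" n] del j by simp
  moreover have "alternating ?s \<and> fits ?s j (p ! j)"
    using alt alternating_insert_at[of j ?s "p ! j"] del j by simp
  ultimately show ?thesis using that[of ?s j "p ! j"] del j by (simp add: snake_iff)
qed

subsection \<open>Counting the admissible insertions\<close>

definition slots :: "int list \<Rightarrow> nat set" where
  "slots e = {j. j \<le> length e \<and> (0 < j \<longrightarrow> e ! (j - 1) = 1) \<and> (j < length e \<longrightarrow> e ! j = 1)}"

definition no_double_minus :: "int list \<Rightarrow> bool" where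
  "no_double_minus e \<longleftrightarrow> (\<forall>i. i + 1 < length e \<longrightarrow> \<not> (e ! i = -1 \<and> e ! (i + 1) = -1))"

lemma finite_slots: "finite (slots e)"
  by (simp add: slots_def)

lemma slots_Nil: "slots [] = {0}"
  by (auto simp: slots_def)

lemma slots_Cons: "slots (a # r) = (if a = 1 then {0} else {}) \<union> Suc ` {i \<in> slots r. i = 0 \<longrightarrow> a = 1}"
proof (rule set_eqI)
  fix j
  show "j \<in> slots (a # r) \<longleftrightarrow> j \<in> (if a = 1 then {0} else {}) \<union> Suc ` {i \<in> slots r. i = 0 \<longrightarrow> a = 1}"
  proof (cases j)
    case (Suc i)
    have "Suc i \<in> slots (a # r) \<longleftrightarrow> i \<in> slots r \<and> (i = 0 \<longrightarrow> a = 1)"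
      by (cases i) (auto simp: slots_def)
    then show ?thesis using Suc by auto
  qed (auto simp: slots_def)
qed

lemma no_double_minus_Cons:
  "no_double_minus (a # r) \<longleftrightarrow> no_double_minus r \<and> (a = -1 \<longrightarrow> r = [] \<or> hd r \<noteq> -1)"
  by (cases r) (auto simp: no_double_minus_def nth_Cons split: nat.splits)

lemma card_slots:
  "set e \<subseteq> {1, -1} \<Longrightarrow> no_double_minus e \<Longrightarrow> int (card (slots e)) = sum_list e + 1"
proof (induction e)
  case Nil
  then show ?case by (simp add: slots_Nil)
next
  case (Cons a r)
  then have IH: "int (card (slots r)) = sum_list r + 1" by (simp add: no_double_minus_Cons)
  show ?case
  proof (cases "a = 1")
    case True
    then have "slots (a # r) = insert 0 (Suc ` slots r)" by (simp add: slots_Cons)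
    then show ?thesis using IH True finite_slots by (simp add: card_image)
  next
    case False
    then have a: "a = -1" using Cons.prems by auto
    have "0 \<in> slots r"
      using Cons.prems a by (cases r) (auto simp: slots_def no_double_minus_Cons)
    then have "card (slots r) \<ge> 1" using finite_slots[of r] by (auto simp: Suc_le_eq card_gt_0_iff)
    moreover have "slots (a # r) = Suc ` (slots r - {0})" using False by (auto simp: slots_Cons)
    ultimately show ?thesis
      using IH a \<open>0 \<in> slots r\<close> finite_slots by (simp add: card_image of_nat_diff)
  qed
qed

lemma fits_iff_slot:
  assumes "j \<le> length s" "0 \<notin> set s" "\<bar>x\<bar> = 1"
  shows "fits s j x \<longleftrightarrow> (j = 0 \<longrightarrow> x = 1) \<and> j \<in> slots (signs True s)"
proof -
  have nonzero: "s ! i \<noteq> 0" if "i < length s" for i using that assms(2) by (metis nth_mem)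
  have left: "zigzag_at (insert_at s j x) (j - 1) \<longleftrightarrow> signs True s ! (j - 1) = 1" if "0 < j"
  proof -
    have "s ! (j - 1) \<noteq> 0" using that assms(1) nonzero by simp
    then show ?thesis using that assms
      by (auto simp: zigzag_at_def nth_insert_at nth_signs lift_def sgn_if abs_if split: if_splits)
  qed
  have right: "zigzag_at (insert_at s j x) j \<longleftrightarrow> signs True s ! j = 1" if "j < length s"
    using that assms nonzero[of j]
    by (auto simp: zigzag_at_def nth_insert_at nth_signs lift_def sgn_if abs_if split: if_splits)
  show ?thesis
    using assms(1,3) left right by (auto simp: fits_def slots_def abs_if)
qed

lemma snake_sign_word:
  assumes "snake n s"
  shows "set (signs True s) \<subseteq> {1, -1}" "no_double_minus (signs True s)" "0 \<in> slots (signs True s)"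
proof -
  have nonzero: "s ! i \<noteq> 0" if "i < length s" for i
    using that snake_length_nonzero(2)[OF assms] by (metis nth_mem)
  have alt: "alternating s" using assms by (simp add: snake_iff)
  show "set (signs True s) \<subseteq> {1, -1}"
    using nonzero by (auto simp: in_set_conv_nth nth_signs sgn_if split: if_splits)
  show "no_double_minus (signs True s)"
    using alt by (auto simp: no_double_minus_def alternating_def zigzag_at_def nth_signs sgn_if split: if_splits)
  show "0 \<in> slots (signs True s)"
    using alt by (auto simp: slots_def alternating_def nth_signs)
qed

text \<open>For d = +-1, the fitting insertions changing alpha by d correspond to the slots (for each
  slot the sign x is forced by d); for d = -1 slot 0 is excluded.\<close>

lemma card_fits_delta:
  assumes snake: "snake n s" and d: "\<bar>d\<bar> = 1"
  shows "int (card {(j, x). j \<le> n \<and> \<bar>x\<bar> = 1 \<and> fits s j x \<and> delta j x = d}) =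
    alpha s + (if d = 1 then 1 else 0)"
proof -
  let ?Z = "slots (signs True s)"
  have len: "length s = n" and nz: "0 \<notin> set s" using snake_length_nonzero[OF snake] by auto
  have "{(j, x). j \<le> n \<and> \<bar>x\<bar> = 1 \<and> fits s j x \<and> delta j x = d} =
      (\<lambda>j. (j, if even j then d else - d)) ` {j \<in> ?Z. j = 0 \<longrightarrow> d = 1}"
    using fits_iff_slot[of _ s] len nz d
    by (auto simp: delta_def slots_def abs_if sgn_if image_iff odd_pos split: if_splits)
  then have "card {(j, x). j \<le> n \<and> \<bar>x\<bar> = 1 \<and> fits s j x \<and> delta j x = d} =
      card ((\<lambda>j. (j, if even j then d else - d)) ` {j \<in> ?Z. j = 0 \<longrightarrow> d = 1})"
    by (rule arg_cong)
  also have "\<dots> = card {j \<in> ?Z. j = 0 \<longrightarrow> d = 1}"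
    by (rule card_image) (simp add: inj_on_def)
  also have "\<dots> = (if d = 1 then card ?Z else card (?Z - {0}))"
    by (cases "d = 1") (auto intro!: arg_cong[where f = card])
  also have "\<dots> = (if d = 1 then card ?Z else card ?Z - 1)"
    using snake_sign_word(3)[OF snake] finite_slots by simp
  moreover have "card ?Z \<ge> 1"
    using snake_sign_word(3)[OF snake] finite_slots[of "signs True s"] by (auto simp: Suc_le_eq card_gt_0_iff)
  ultimately show ?thesis
    using card_slots[OF snake_sign_word(1,2)[OF snake]] by (simp add: alpha_signs of_nat_diff)
qed

definition insertions :: "nat \<Rightarrow> int \<Rightarrow> int list \<Rightarrow> (nat \<times> int) set" where
  "insertions n k s = {(j, x). j \<le> n \<and> \<bar>x\<bar> = 1 \<and> fits s j x \<and> alpha s + delta j x = k}"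

lemma card_insertions:
  assumes "snake n s"
  shows "int (card (insertions n k s)) =
    (if alpha s = k - 1 then k else 0) + (if alpha s = k + 1 then k + 1 else 0)"
proof -
  have eq: "insertions n k s = {(j, x). j \<le> n \<and> \<bar>x\<bar> = 1 \<and> fits s j x \<and> delta j x = k - alpha s}"
    by (auto simp: insertions_def)
  consider "alpha s = k - 1" | "alpha s = k + 1" | "\<bar>k - alpha s\<bar> \<noteq> 1" by linarith
  then show ?thesis
  proof cases
    case 1
    then show ?thesis using eq card_fits_delta[OF assms, of 1] by simp
  next
    case 2
    then show ?thesis using eq card_fits_delta[OF assms, of "-1"] by simp
  next
    case 3
    have "(j, x) \<notin> insertions n k s" for j x
    proof
      assume "(j, x) \<in> insertions n k s"
      then have "\<bar>x\<bar> = 1" "delta j x = k - alpha s" by (auto simp: eq)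
      then show False using 3 by (auto simp: delta_def sgn_if abs_if split: if_splits)
    qed
    then have "insertions n k s = {}" by auto
    then show ?thesis using 3 by auto
  qed
qed

lemma finite_snakes: "finite {p. snake n p}"
proof (rule finite_subset)
  have "\<bar>y\<bar> \<in> {1..int n}" if "snake n p" "y \<in> set p" for p y
  proof -
    have "\<bar>y\<bar> \<in> set (map abs p)" using that(2) by simp
    then show ?thesis using that(1) by (simp add: snake_iff signed_perm_def)
  qed
  then show "{p. snake n p} \<subseteq> {p. set p \<subseteq> {- int n..int n} \<and> length p = n}"
    by (force simp: snake_length_nonzero(1))
  show "finite {p. set p \<subseteq> {- int n..int n} \<and> length p = n}"
    by (rule finite_lists_length_eq) simp
qed

lemma snakes_Suc:
  "{p. snake (Suc n) p \<and> alpha p = k} =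
     (\<lambda>(s, j, x). insert_at s j x) ` (SIGMA s:{s. snake n s}. insertions n k s)"
proof (intro set_eqI iffI)
  fix p assume "p \<in> {p. snake (Suc n) p \<and> alpha p = k}"
  then have p: "snake (Suc n) p" "alpha p = k" by auto
  obtain s j x where "snake n s" "j \<le> n" "\<bar>x\<bar> = 1" "fits s j x" "p = insert_at s j x"
    using snake_Suc_decompose[OF p(1)] .
  moreover have "alpha p = alpha s + delta j x"
    using calculation alpha_insert_at snake_length_nonzero(1) by simp
  ultimately show "p \<in> (\<lambda>(s, j, x). insert_at s j x) ` (SIGMA s:{s. snake n s}. insertions n k s)"
    using p(2) by (force simp: insertions_def)
next
  fix p assume "p \<in> (\<lambda>(s, j, x). insert_at s j x) ` (SIGMA s:{s. snake n s}. insertions n k s)"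
  then obtain s j x where s: "snake n s" "(j, x) \<in> insertions n k s" "p = insert_at s j x" by auto
  then have "j \<le> length s" "0 \<notin> set s" "\<bar>x\<bar> = 1" "fits s j x" "alpha s + delta j x = k"
    using snake_length_nonzero[OF s(1)] by (auto simp: insertions_def)
  then show "p \<in> {p. snake (Suc n) p \<and> alpha p = k}"
    using s snake_length_nonzero[OF s(1)]
    by (simp add: snake_iff signed_perm_insert_at alternating_insert_at alpha_insert_at)
qed

lemma inj_on_insertions: "inj_on (\<lambda>(s, j, x). insert_at s j x) (SIGMA s:{s. snake n s}. insertions n k s)"
proof (rule inj_onI, clarsimp)
  fix s j x s' j' x'
  assume "snake n s" "(j, x) \<in> insertions n k s" "snake n s'" "(j', x') \<in> insertions n k s'"
    and "insert_at s j x = insert_at s' j' x'"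
  then show "s = s' \<and> j = j' \<and> x = x'"
    using insert_at_inj[of s s' j j' x x'] snake_length_nonzero by (auto simp: insertions_def)
qed

lemma finite_insertions: "finite (insertions n k s)"
  by (rule finite_subset[of _ "{0..n} \<times> {-1..1}"]) (auto simp: insertions_def)

lemma snakes_recursion:
  "int (card {p. snake (Suc n) p \<and> alpha p = k}) =
     k * int (card {s. snake n s \<and> alpha s = k - 1}) + (k + 1) * int (card {s. snake n s \<and> alpha s = k + 1})"
proof -
  have "card {p. snake (Suc n) p \<and> alpha p = k} = (\<Sum>s | snake n s. card (insertions n k s))"
    unfolding snakes_Suc card_image[OF inj_on_insertions]
    using finite_snakes finite_insertions by simp
  then have "int (card {p. snake (Suc n) p \<and> alpha p = k}) =
      (\<Sum>s | snake n s. (if alpha s = k - 1 then k else 0) + (if alpha s = k + 1 then k + 1 else 0))"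
    by (simp add: card_insertions)
  also have "\<dots> = k * int (card {s. snake n s \<and> alpha s = k - 1}) + (k + 1) * int (card {s. snake n s \<and> alpha s = k + 1})"
    using finite_snakes by (simp add: sum.distrib sum.If_cases Int_def conj_commute)
  finally show ?thesis .
qed

theorem B_eq_snakes: "B n k = card {p. snake n p \<and> alpha p = int k}"
proof (induction n arbitrary: k)
  case 0
  have "{p. snake 0 p \<and> alpha p = int k} = (if k = 0 then {[]} else {})"
    by (auto simp: snake_def signed_perm_def alpha_def)
  then show ?case by (simp add: B_0)
next
  case (Suc n)
  have down: "int k * int (B n (k - 1)) = int k * int (card {s. snake n s \<and> alpha s = int k - 1})"
    by (cases k) (simp_all add: Suc.IH)
  have up: "int (B n (k + 1)) = int (card {s. snake n s \<and> alpha s = int k + 1})"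
    using Suc.IH[of "k + 1"] by (simp add: add.commute)
  have "int (B (Suc n) k) = int k * int (B n (k - 1)) + (int k + 1) * int (B n (k + 1))"
    by (simp add: B_Suc algebra_simps)
  also have "\<dots> = int (card {p. snake (Suc n) p \<and> alpha p = int k})"
    by (simp only: down up snakes_recursion)
  finally show ?case by simp
qed

theorem theorem4p5:
  fixes n k :: nat
  assumes "k \<le> n"
  shows "B n k = card {p. snake n p \<and> alpha p = int k}"
  by (rule B_eq_snakes)

end
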